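(* Consider a congestion game with $m\ge1$ players and $F\ge 2$ facilities in which every player has the full action space $\mathcal A_i=2^{\mathcal F}$, and let $\bm a^*$ be a pure Nash equilibrium. Let $S=\{\bm a^*\}\cup\{(a^*_i\,\triangle\,\{f\},\bm a^*_{-i}): i\in[m],\ f\in\mathcal F\}$ (the NE together with all joint actions in which exactly one player toggles membership of exactly one facility; $|S|=mF+1$), let $\rho$ be uniform on $S$, and let $\bm a^1,\dots,\bm a^n$ be i.i.d. from $\rho$. Let $\delta\in(0,1)$. If $n\ge 8(mF+1)\log((mF+1)/\delta)$, then with probability at least $1-\delta$, for every $i\in[m]$ and every $\pi_i\in\Delta(\mathcal A_i)$, $$V\succeq I+\frac{n}{2mF^4}\,\mathbb E_{\bm a\sim(\pi_i,\bm a^*_{-i})}\big[A_i(\bm a)A_i(\bm a)^\top\big],$$ where $(\pi_i,\bm a^*_{-i})$ denotes the policy in which player $i$ plays $\pi_i$ and every other player $j$ plays $a^*_j$ deterministically. That is, Assumption (Weak Covariance Domination) holds with $C_{\mathrm{agent}}=\frac{1}{2mF^4}$ and $\pi^*=\bm a^*$.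
   Context: Congestion game: $m$ players, finite facility set $\mathcal F$ with $F=|\mathcal F|$, action sets $\mathcal A_i\subseteq 2^{\mathcal F}$, $\mathcal A=\prod_i\mathcal A_i$, $n^f(\bm a)=|\{i: f\in a_i\}|$; facility $f$ with $\ell\ge1$ users has mean reward $r^f(\ell)$ and player $i$'s mean reward is $r_i(\bm a)=\sum_{f\in a_i}r^f(n^f(\bm a))$. A pure Nash equilibrium is a joint action $\bm a^*$ such that no player can increase $r_i$ by changing only its own action. Feature map: let $d=mF$ and index the coordinates of $\mathbb R^d$ by pairs $(f,\ell)$ with $f\in\mathcal F$, $\ell\in\{1,\dots,m\}$; let $e_{(f,\ell)}$ be the standard basis vectors. For $i\in[m]$ and $\bm a\in\mathcal A$, $A_i(\bm a)=\sum_{f\in a_i}e_{(f,n^f(\bm a))}\in\{0,1\}^d$, so that $r_i(\bm a)=\langle A_i(\bm a),\theta\rangle$ with $\theta_{(f,\ell)}=r^f(\ell)$. Agent-level covariance matrix: $V=I+\sum_{k=1}^n\sum_{i=1}^m A_i(\bm a^k)A_i(\bm a^k)^\top$, where $\bm a^1,\dots,\bm a^n$ are the joint actions in the dataset. $\succeq$ is the positive semidefinite (Loewner) order. *)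

theory Defs
  imports "HOL-Probability.Probability"
begin

text \<open>Joint actions: player j (for j < m) plays the set of facilities a j.
  Facilities are the elements of the finite type 'f; every player's action space is the
  full power set.\<close>

type_synonym 'f joint = "nat \<Rightarrow> 'f set"

definition nusers :: "nat \<Rightarrow> 'f joint \<Rightarrow> 'f \<Rightarrow> nat" where
  "nusers m a f = card {j \<in> {0..<m}. f \<in> a j}"

definition reward :: "nat \<Rightarrow> ('f \<Rightarrow> nat \<Rightarrow> real) \<Rightarrow> nat \<Rightarrow> 'f joint \<Rightarrow> real" where
  "reward m r i a = (\<Sum>f\<in>a i. r f (nusers m a f))"

definition pure_NE :: "nat \<Rightarrow> ('f \<Rightarrow> nat \<Rightarrow> real) \<Rightarrow> 'f joint \<Rightarrow> bool" where
  "pure_NE m r a \<longleftrightarrow> (\<forall>i<m. \<forall>b. reward m r i (a(i := b)) \<le> reward m r i a)"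

text \<open>Coordinates of R^d, d = mF, indexed by pairs (f, l), l in {1..m}.\<close>
definition coords :: "nat \<Rightarrow> ('f \<times> nat) set" where
  "coords m = UNIV \<times> {1..m}"

definition feat :: "nat \<Rightarrow> nat \<Rightarrow> 'f joint \<Rightarrow> ('f \<times> nat) \<Rightarrow> real" where
  "feat m i a = (\<lambda>(f, l). if f \<in> a i \<and> l = nusers m a f then 1 else 0)"

definition idm :: "('f \<times> nat) \<Rightarrow> ('f \<times> nat) \<Rightarrow> real" where
  "idm p q = (if p = q then 1 else 0)"

definition covV :: "nat \<Rightarrow> nat \<Rightarrow> (nat \<Rightarrow> 'f joint) \<Rightarrow> ('f \<times> nat) \<Rightarrow> ('f \<times> nat) \<Rightarrow> real" where
  "covV m n data p q = idm p q + (\<Sum>k\<in>{1..n}. \<Sum>i<m. feat m i (data k) p * feat m i (data k) q)"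

definition loewner_ge :: "('a set) \<Rightarrow> ('a \<Rightarrow> 'a \<Rightarrow> real) \<Rightarrow> ('a \<Rightarrow> 'a \<Rightarrow> real) \<Rightarrow> bool" where
  "loewner_ge D M N \<longleftrightarrow> (\<forall>x. (\<Sum>p\<in>D. \<Sum>q\<in>D. x p * (M p q - N p q) * x q) \<ge> 0)"

definition toggle_set :: "nat \<Rightarrow> 'f joint \<Rightarrow> 'f joint set" where
  "toggle_set m astar = insert astar
     {astar(i := (if f \<in> astar i then astar i - {f} else insert f (astar i))) | i f. i < m}"

definition dataset_pmf :: "nat \<Rightarrow> 'f joint set \<Rightarrow> (nat \<Rightarrow> 'f joint) pmf" where
  "dataset_pmf n S = Pi_pmf {1..n} undefined (\<lambda>_. pmf_of_set S)"

end

theory Submission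
  imports Defs
begin

text \<open>Along a unilateral deviation of player i from astar the loads of the other players are
  fixed, so B \<mapsto> \<langle>x, A_i(B, astar_{-i})\<rangle> is a modular set function. A modular function is an
  affine combination of its values at astar_i and at the F single toggles of astar_i whose
  coefficient vector has squared norm at most F^2; by Cauchy-Schwarz every deviation is
  therefore dominated by F^2 times the toggle set S. A Chernoff bound on the number of hits of
  each point of S, together with a union bound over S, shows that with probability at least
  1 - \<delta> every point of S occurs at least n/(2|S|) times in the data, and |S| \<le> mF^2 yields the
  constant 1/(2mF^4).\<close>

definition toggle :: "'a set \<Rightarrow> 'a \<Rightarrow> 'a set" where
  "toggle A f = (if f \<in> A then A - {f} else insert f A)"

lemma toggle_neq: "toggle A f \<noteq> A"
  by (auto simp: toggle_def)

lemma inj_toggle: "inj (toggle A)"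
  by (rule injI) (auto simp: toggle_def split: if_splits)

lemma sum_toggle:
  fixes w :: "'a::finite \<Rightarrow> 'b::ab_group_add"
  shows "sum w (toggle A f) = sum w A + (if f \<in> A then - w f else w f)"
  by (simp add: toggle_def sum_diff1)

lemma sum_eq_toggle_combination:
  fixes w :: "'a::finite \<Rightarrow> real"
  shows "sum w B = (1 - real (card (sym_diff A B))) * sum w A
                   + (\<Sum>f\<in>sym_diff A B. sum w (toggle A f))"
proof -
  have "(\<Sum>f\<in>sym_diff A B. sum w (toggle A f))
        = (\<Sum>f\<in>sym_diff A B. sum w A) + ((\<Sum>f\<in>A - B. - w f) + (\<Sum>f\<in>B - A. w f))"
    unfolding sum_toggle sum.distrib
    by (subst sum.union_disjoint) (auto intro!: sum.cong)
  moreover have "sum w A = sum w (A \<inter> B) + sum w (A - B)" "sum w B = sum w (A \<inter> B) + sum w (B - A)"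
    using sum.Int_Diff[of A w B] sum.Int_Diff[of B w A] by (auto simp: Int_commute)
  ultimately show ?thesis by (simp add: algebra_simps sum_negf)
qed

lemma sq_one_minus_plus_le_sq:
  assumes "k \<le> K" "1 \<le> K"
  shows "(1 - real k)^2 + real k \<le> real K ^ 2"
proof (cases "k = 0")
  case False
  then have "(1 - real k)^2 + real k \<le> real k ^ 2"
    by (simp add: power2_eq_square algebra_simps)
  also have "\<dots> \<le> real K ^ 2" using assms by (simp add: power_mono)
  finally show ?thesis .
qed (use assms in simp)

lemma square_sum_le_toggle_squares:
  fixes w :: "'a::finite \<Rightarrow> real"
  shows "(sum w B)^2 \<le> real CARD('a)^2 * ((sum w A)^2 + (\<Sum>f\<in>UNIV. (sum w (toggle A f))^2))"
proof -
  define D where "D = sym_diff A B"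
  define y where "y f = sum w (toggle A f)" for f
  define a :: "'a option \<Rightarrow> real" where "a = case_option (1 - real (card D)) (\<lambda>_. 1::real)"
  define b where "b = case_option (sum w A) y"
  have I: "(\<Sum>j\<in>insert None (Some ` D). h j) = h None + (\<Sum>f\<in>D. h (Some f))" for h :: "_ \<Rightarrow> real"
    by (simp add: sum.reindex)
  have "(sum w B)^2 = (\<Sum>j\<in>insert None (Some ` D). a j * b j)^2"
    unfolding I sum_eq_toggle_combination[of w B A] by (simp add: a_def b_def y_def D_def)
  also have "\<dots> \<le> ((1 - real (card D))^2 + real (card D)) * ((sum w A)^2 + (\<Sum>f\<in>D. (y f)^2))"
    using Cauchy_Schwarz_ineq_sum[of a b "insert None (Some ` D)"] unfolding I
    by (simp add: a_def b_def)
  also have "\<dots> \<le> real CARD('a)^2 * ((sum w A)^2 + (\<Sum>f\<in>UNIV. (y f)^2))"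
  proof (rule mult_mono)
    show "(1 - real (card D))^2 + real (card D) \<le> real CARD('a)^2"
      by (rule sq_one_minus_plus_le_sq) (simp_all add: card_mono)
    show "(sum w A)^2 + (\<Sum>f\<in>D. (y f)^2) \<le> (sum w A)^2 + (\<Sum>f\<in>UNIV. (y f)^2)"
      by (intro add_left_mono sum_mono2) auto
  qed (auto intro!: add_nonneg_nonneg sum_nonneg)
  finally show ?thesis unfolding y_def .
qed

lemma sum_toggle_neighbours_le:
  fixes g :: "('i \<Rightarrow> 'f::finite set) \<Rightarrow> real"
  assumes "finite S" "a \<in> S" "\<And>f. a(i := toggle (a i) f) \<in> S" "\<And>s. g s \<ge> 0"
  shows "g a + (\<Sum>f\<in>UNIV. g (a(i := toggle (a i) f))) \<le> (\<Sum>s\<in>S. g s)"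
proof -
  define t where "t f = a(i := toggle (a i) f)" for f
  have "inj t"
    by (rule injI) (metis t_def fun_upd_same inj_toggle injD)
  moreover have "a \<notin> range t"
    by (metis t_def fun_upd_same rangeE toggle_neq)
  ultimately have "g a + (\<Sum>f\<in>UNIV. g (t f)) = (\<Sum>s\<in>insert a (range t). g s)"
    by (simp add: sum.reindex)
  also have "\<dots> \<le> (\<Sum>s\<in>S. g s)"
    using assms by (intro sum_mono2) (auto simp: t_def)
  finally show ?thesis unfolding t_def .
qed

lemma sum_over_sample_ge:
  fixes \<phi> :: "'a \<Rightarrow> real"
  assumes "finite K" "finite S" "\<And>s. \<phi> s \<ge> 0"
    and "\<And>s. s \<in> S \<Longrightarrow> t \<le> real (card {k\<in>K. d k = s})"
  shows "t * (\<Sum>s\<in>S. \<phi> s) \<le> (\<Sum>k\<in>K. \<phi> (d k))"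
proof -
  have "t * (\<Sum>s\<in>S. \<phi> s) \<le> (\<Sum>s\<in>S. real (card {k\<in>K. d k = s}) * \<phi> s)"
    unfolding sum_distrib_left using assms by (intro sum_mono mult_right_mono) auto
  also have "\<dots> = (\<Sum>s\<in>S. \<Sum>k\<in>{k. k \<in> {k\<in>K. d k \<in> S} \<and> d k = s}. \<phi> (d k))"
  proof (intro sum.cong refl)
    fix s assume "s \<in> S"
    then have "{k. k \<in> {k\<in>K. d k \<in> S} \<and> d k = s} = {k\<in>K. d k = s}" by auto
    then show "real (card {k\<in>K. d k = s}) * \<phi> s = (\<Sum>k\<in>{k. k \<in> {k\<in>K. d k \<in> S} \<and> d k = s}. \<phi> (d k))"
      by simp
  qed
  also have "\<dots> = (\<Sum>k\<in>{k\<in>K. d k \<in> S}. \<phi> (d k))"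
    by (rule sum.group) (use assms in auto)
  also have "\<dots> \<le> (\<Sum>k\<in>K. \<phi> (d k))"
    using assms by (intro sum_mono2) auto
  finally show ?thesis .
qed

definition quad_form :: "'a set \<Rightarrow> ('a \<Rightarrow> 'a \<Rightarrow> real) \<Rightarrow> ('a \<Rightarrow> real) \<Rightarrow> real" where
  "quad_form D M x = (\<Sum>p\<in>D. \<Sum>q\<in>D. x p * M p q * x q)"

lemma loewner_ge_iff_quad_form:
  "loewner_ge D M N \<longleftrightarrow> (\<forall>x. quad_form D N x \<le> quad_form D M x)"
proof -
  have "(\<Sum>p\<in>D. \<Sum>q\<in>D. x p * (M p q - N p q) * x q) = quad_form D M x - quad_form D N x" for x
    by (simp add: quad_form_def algebra_simps flip: sum_subtractf)
  then show ?thesis by (simp add: loewner_ge_def)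
qed

lemma quad_form_add:
  "quad_form D (\<lambda>p q. M p q + N p q) x = quad_form D M x + quad_form D N x"
  by (simp add: quad_form_def algebra_simps sum.distrib)

lemma quad_form_scale:
  "quad_form D (\<lambda>p q. c * M p q) x = c * quad_form D M x"
  by (simp add: quad_form_def sum_distrib_left mult_ac)

lemma quad_form_sum:
  "quad_form D (\<lambda>p q. \<Sum>k\<in>K. M k p q) x = (\<Sum>k\<in>K. quad_form D (M k) x)"
proof -
  have "quad_form D (\<lambda>p q. \<Sum>k\<in>K. M k p q) x = (\<Sum>p\<in>D. \<Sum>q\<in>D. \<Sum>k\<in>K. x p * M k p q * x q)"
    by (simp add: quad_form_def sum_distrib_left sum_distrib_right)
  also have "\<dots> = (\<Sum>p\<in>D. \<Sum>k\<in>K. \<Sum>q\<in>D. x p * M k p q * x q)"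
    by (rule sum.cong[OF refl], rule sum.swap)
  also have "\<dots> = (\<Sum>k\<in>K. quad_form D (M k) x)"
    unfolding quad_form_def by (rule sum.swap)
  finally show ?thesis .
qed

lemma quad_form_outer:
  "quad_form D (\<lambda>p q. v p * v q) x = (\<Sum>p\<in>D. x p * v p)^2"
  by (simp add: quad_form_def power2_eq_square sum_product mult_ac)

lemma quad_form_deviation_target:
  "quad_form D (\<lambda>p q. idm p q + c * (\<Sum>b\<in>B. pmf \<pi> b * (v b p * v b q))) x
   = quad_form D idm x + c * (\<Sum>b\<in>B. pmf \<pi> b * (\<Sum>p\<in>D. x p * v b p)^2)"
  by (simp add: quad_form_add quad_form_scale quad_form_sum quad_form_outer)

lemma quad_form_covV:
  "quad_form D (covV m n d) x
   = quad_form D idm x + (\<Sum>k\<in>{1..n}. \<Sum>j<m. (\<Sum>p\<in>D. x p * feat m j (d k) p)^2)"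
proof -
  have "covV m n d = (\<lambda>p q. idm p q + (\<Sum>k\<in>{1..n}. \<Sum>j<m. feat m j (d k) p * feat m j (d k) q))"
    by (simp add: covV_def fun_eq_iff)
  then show ?thesis by (simp add: quad_form_add quad_form_sum quad_form_outer)
qed

lemma nusers_update_mem:
  assumes "i < m" "g \<in> B"
  shows "nusers m (a(i := B)) g = card {j \<in> {0..<m}. j \<noteq> i \<and> g \<in> a j} + 1"
proof -
  have "{j \<in> {0..<m}. g \<in> (a(i := B)) j} = insert i {j \<in> {0..<m}. j \<noteq> i \<and> g \<in> a j}"
    using assms by auto
  then show ?thesis unfolding nusers_def by simp
qed

lemma feat_deviation_inner_modular:
  fixes x :: "'f::finite \<times> nat \<Rightarrow> real"
  assumes "i < m"
  obtains w where "\<And>B. (\<Sum>p\<in>coords m. x p * feat m i (a(i := B)) p) = sum w B"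
proof
  fix B :: "'f set"
  define c where "c g = card {j \<in> {0..<m}. j \<noteq> i \<and> g \<in> a j} + 1" for g
  define w where "w g = (\<Sum>l\<in>{1..m}. if l = c g then x (g, l) else 0)" for g
  have row: "(\<Sum>l\<in>{1..m}. x (g, l) * feat m i (a(i := B)) (g, l)) = (if g \<in> B then w g else 0)" for g
  proof (cases "g \<in> B")
    case True
    then have "x (g, l) * feat m i (a(i := B)) (g, l) = (if l = c g then x (g, l) else 0)" for l
      by (simp add: feat_def c_def nusers_update_mem[OF assms True])
    with True show ?thesis by (simp add: w_def)
  qed (simp add: feat_def)
  have "(\<Sum>p\<in>coords m. x p * feat m i (a(i := B)) p)
        = (\<Sum>g\<in>UNIV. \<Sum>l\<in>{1..m}. x (g, l) * feat m i (a(i := B)) (g, l))"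
    unfolding coords_def by (simp add: sum.cartesian_product)
  also have "\<dots> = sum w B"
    unfolding row by (simp add: sum.If_cases)
  finally show "(\<Sum>p\<in>coords m. x p * feat m i (a(i := B)) p) = sum w B" .
qed

lemma deviation_inner_square_le:
  fixes x :: "'f::finite \<times> nat \<Rightarrow> real"
  assumes "i < m"
  defines "Q \<equiv> \<lambda>s. \<Sum>p\<in>coords m. x p * feat m i s p"
  shows "(Q (a(i := B)))^2 \<le> real CARD('f)^2 * ((Q a)^2 + (\<Sum>f\<in>UNIV. (Q (a(i := toggle (a i) f)))^2))"
proof -
  obtain w where w: "\<And>B. Q (a(i := B)) = sum w B"
    using feat_deviation_inner_modular[OF assms(1)] unfolding Q_def by blast
  have "Q a = sum w (a i)" using w[of "a i"] by simp
  then show ?thesis unfolding w by (rule ssubst) (rule square_sum_le_toggle_squares)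
qed

lemma covV_dominates_deviations:
  fixes d :: "nat \<Rightarrow> 'f::finite joint" and \<pi> :: "'f set pmf"
  assumes "i < m" "finite S" "a \<in> S" "\<And>f. a(i := toggle (a i) f) \<in> S"
    and cover: "\<And>s. s \<in> S \<Longrightarrow> real n \<le> 2 * real (card S) * real (card {k\<in>{1..n}. d k = s})"
    and small: "real (card S) \<le> real m * real CARD('f) ^ 2"
  shows "loewner_ge (coords m) (covV m n d)
           (\<lambda>p q. idm p q + real n / (2 * real m * real CARD('f) ^ 4) *
              (\<Sum>b\<in>UNIV. pmf \<pi> b * (feat m i (a(i := b)) p * feat m i (a(i := b)) q)))"
  unfolding loewner_ge_iff_quad_form quad_form_covV quad_form_deviation_target
proof (intro allI add_left_mono)
  fix x
  define F where "F = real CARD('f)"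
  define c where "c = real n / (2 * real m * F ^ 4)"
  define t where "t = real n / (2 * real (card S))"
  define Q where "Q j (s :: 'f joint) = (\<Sum>p\<in>coords m. x p * feat m j s p)" for j s
  define R where "R = (Q i a)^2 + (\<Sum>f\<in>UNIV. (Q i (a(i := toggle (a i) f)))^2)"
  have "card S > 0" using assms(2,3) by (auto simp: card_gt_0_iff)
  then have "c * F^2 \<le> t"
    using small assms(1) by (simp add: c_def t_def F_def frac_le power4_eq_xxxx power2_eq_square)
  have "(\<Sum>b\<in>UNIV. pmf \<pi> b * (Q i (a(i := b)))^2) \<le> (\<Sum>b\<in>UNIV. pmf \<pi> b * (F^2 * R))"
    using deviation_inner_square_le[OF assms(1)]
    by (intro sum_mono mult_left_mono) (simp_all add: Q_def R_def F_def)
  also have "\<dots> = F^2 * R" by (simp add: sum_pmf_eq_1 flip: sum_distrib_right)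
  finally have "c * (\<Sum>b\<in>UNIV. pmf \<pi> b * (Q i (a(i := b)))^2) \<le> c * (F^2 * R)"
    by (rule mult_left_mono) (simp add: c_def)
  also have "\<dots> = (c * F^2) * R" by (simp only: mult.assoc)
  also have "\<dots> \<le> t * R"
    using \<open>c * F^2 \<le> t\<close> by (rule mult_right_mono) (simp add: R_def sum_nonneg)
  also have "\<dots> \<le> t * (\<Sum>s\<in>S. (Q i s)^2)"
    unfolding R_def using assms(2-4) \<open>card S > 0\<close>
    by (intro mult_left_mono sum_toggle_neighbours_le) (simp_all add: t_def)
  also have "\<dots> \<le> (\<Sum>k\<in>{1..n}. (Q i (d k))^2)"
    using assms(2) cover \<open>card S > 0\<close>
    by (intro sum_over_sample_ge) (simp_all add: t_def field_simps)
  also have "\<dots> \<le> (\<Sum>k\<in>{1..n}. \<Sum>j<m. (Q j (d k))^2)"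
    using assms(1) by (intro sum_mono member_le_sum) auto
  finally show "c * (\<Sum>b\<in>UNIV. pmf \<pi> b * (\<Sum>p\<in>coords m. x p * feat m i (a(i := b)) p)^2)
      \<le> (\<Sum>k\<in>{1..n}. \<Sum>j<m. (\<Sum>p\<in>coords m. x p * feat m j (d k) p)^2)"
    unfolding Q_def F_def c_def .
qed

lemma ln_2_le_3_4: "ln 2 \<le> (3/4::real)"
proof -
  have "(35/32::real)^8 \<le> exp (3/32)^8"
    using exp_ge_add_one_self[of "3/32::real"] by (intro power_mono) simp_all
  also have "\<dots> = exp (3/4)" by (simp flip: exp_of_nat_mult)
  finally have "2 \<le> exp (3/4::real)" by (simp add: power_divide)
  then show ?thesis using ln_le_cancel_iff[of 2 "exp (3/4)"] by simp
qed

lemma half_power_eq_exp: "(1/2::real) ^ c = exp (- ln 2 * real c)"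
proof -
  have "exp (- ln 2 * real c) = exp (- ln 2) ^ c" by (simp add: mult.commute flip: exp_of_nat_mult)
  then show ?thesis by (simp add: exp_minus)
qed

text \<open>Markov's inequality for the exponential moment E[2^(-count)] = (1 - q/2)^|K|;
  1 - ln 2 \<ge> 1/4 gives the constant 8.\<close>
lemma Pi_pmf_count_lower_tail:
  fixes p :: "'a pmf" and s :: 'a
  assumes "finite K"
  defines "q \<equiv> pmf p s"
  shows "measure_pmf.prob (Pi_pmf K dflt (\<lambda>_. p)) {d. 2 * real (card {k\<in>K. d k = s}) < real (card K) * q}
         \<le> exp (- real (card K) * q / 8)"
proof -
  define n where "n = real (card K)"
  define P where "P = Pi_pmf K dflt (\<lambda>_. p)"
  define h where "h t = (if t = s then 1/2 else (1::real))" for t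
  define g where "g d = (\<Prod>k\<in>K. h (d k))" for d
  define \<theta> where "\<theta> = exp (- ln 2 * (n * q / 2))"
  have g_eq: "g d = exp (- ln 2 * real (card {k\<in>K. d k = s}))" for d
  proof -
    have "g d = (\<Prod>k\<in>{k\<in>K. d k = s}. 1/2)"
      unfolding g_def h_def by (rule prod.inter_filter[symmetric, OF assms(1)])
    then show ?thesis by (simp add: half_power_eq_exp)
  qed
  have int_h: "integrable (measure_pmf p) h"
    by (intro measure_pmf.integrable_const_bound[where B = 1]) (auto simp: h_def)
  have "measure_pmf.expectation p h = measure_pmf.expectation p (\<lambda>t. 1 - indicator {s} t / 2)"
    by (intro Bochner_Integration.integral_cong) (auto simp: h_def)
  also have "\<dots> = 1 - q / 2"
    by (subst Bochner_Integration.integral_diff)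
       (auto simp: q_def measure_pmf_single split: split_indicator
             intro!: measure_pmf.integrable_const_bound[where B = 1])
  finally have Eh: "measure_pmf.expectation p h = 1 - q / 2" .
  have Eg: "measure_pmf.expectation P g = (1 - q / 2) ^ card K"
    unfolding P_def g_def using assms(1) int_h
    by (subst expectation_prod_Pi_pmf) (auto simp: h_def Eh)
  have "measure_pmf.prob P {d. 2 * real (card {k\<in>K. d k = s}) < n * q}
        \<le> measure_pmf.prob P {d\<in>space (measure_pmf P). g d \<ge> \<theta>}"
    by (intro measure_pmf.finite_measure_mono) (auto simp: g_eq \<theta>_def)
  also have "\<dots> \<le> measure_pmf.expectation P g / \<theta>"
    unfolding P_def g_def
    by (intro integral_Markov_inequality_measure integrable_prod_Pi_pmf assms(1) int_h)
       (auto simp: h_def \<theta>_def intro!: prod_nonneg)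
  also have "\<dots> \<le> exp (- q / 2) ^ card K / \<theta>"
    unfolding Eg using exp_ge_add_one_self[of "- q / 2"] pmf_le_1[of p s]
    by (intro divide_right_mono power_mono) (auto simp: q_def \<theta>_def)
  also have "\<dots> = exp (- (1 - ln 2) * (n * q / 2))"
    by (simp add: \<theta>_def n_def algebra_simps flip: exp_of_nat_mult exp_diff)
  also have "\<dots> \<le> exp (- n * q / 8)"
  proof -
    have "0 \<le> n * q" by (simp add: n_def q_def)
    then have "1/4 * (n * q / 2) \<le> (1 - ln 2) * (n * q / 2)"
      using ln_2_le_3_4 by (intro mult_right_mono) auto
    then have "- (1 - ln 2) * (n * q / 2) \<le> - n * q / 8"
      by (simp add: algebra_simps)
    then show ?thesis by (rule exp_mono)
  qed
  finally show ?thesis unfolding P_def n_def .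
qed

lemma Pi_pmf_uniform_covers:
  fixes S :: "'a set" and K :: "'k set"
  assumes "finite K" "finite S" "S \<noteq> {}"
  shows "measure_pmf.prob (Pi_pmf K dflt (\<lambda>_. pmf_of_set S))
           {d. \<forall>s\<in>S. real (card K) \<le> 2 * real (card S) * real (card {k\<in>K. d k = s})}
         \<ge> 1 - real (card S) * exp (- real (card K) / (8 * real (card S)))"
proof -
  define P where "P = Pi_pmf K dflt (\<lambda>_. pmf_of_set S)"
  define Bad :: "'a \<Rightarrow> ('k \<Rightarrow> 'a) set" where "Bad s = {d. real (card K) > 2 * real (card S) * real (card {k\<in>K. d k = s})}" for s
  have card_pos: "real (card S) > 0" using assms by (simp add: card_gt_0_iff)
  have "measure_pmf.prob P (\<Union>s\<in>S. Bad s) \<le> (\<Sum>s\<in>S. measure_pmf.prob P (Bad s))"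
    using assms by (intro measure_pmf.finite_measure_subadditive_finite) auto
  also have "\<dots> \<le> (\<Sum>s\<in>S. exp (- real (card K) / (8 * real (card S))))"
  proof (intro sum_mono)
    fix s assume "s \<in> S"
    then have "Bad s = {d. 2 * real (card {k\<in>K. d k = s}) < real (card K) * pmf (pmf_of_set S) s}"
      using assms card_pos by (auto simp: Bad_def field_simps)
    then show "measure_pmf.prob P (Bad s) \<le> exp (- real (card K) / (8 * real (card S)))"
      using Pi_pmf_count_lower_tail[OF assms(1), of dflt "pmf_of_set S" s] \<open>s \<in> S\<close> assms
      by (simp add: P_def mult.commute)
  qed
  finally have "measure_pmf.prob P (\<Union>s\<in>S. Bad s) \<le> real (card S) * exp (- real (card K) / (8 * real (card S)))"
    by simp
  moreover have "{d. \<forall>s\<in>S. real (card K) \<le> 2 * real (card S) * real (card {k\<in>K. d k = s})}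
                 = UNIV - (\<Union>s\<in>S. Bad s)"
    by (auto simp: Bad_def not_less)
  ultimately show ?thesis
    using measure_pmf.prob_compl[of "\<Union>s\<in>S. Bad s" P] by (simp add: P_def)
qed

lemma sample_size_suffices:
  fixes N N0 \<delta> n :: real
  assumes "0 < N" "N \<le> N0" "0 < \<delta>" "0 \<le> n" "8 * N0 * ln (N0 / \<delta>) \<le> n"
  shows "N * exp (- n / (8 * N)) \<le> \<delta>"
proof -
  have "exp (- n / (8 * N)) \<le> exp (- n / (8 * N0))"
    using assms by (simp add: frac_le)
  also have "\<dots> \<le> exp (- ln (N0 / \<delta>))"
    using assms by (simp add: field_simps)
  also have "\<dots> = \<delta> / N0"
    using assms by (simp add: exp_minus)
  finally have "N * exp (- n / (8 * N)) \<le> N * (\<delta> / N0)"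
    using assms(1) by (intro mult_left_mono) simp_all
  also have "\<dots> \<le> \<delta>"
    using assms by (simp add: field_simps)
  finally show ?thesis .
qed

lemma toggle_set_eq:
  "toggle_set m a = insert a ((\<lambda>(i, f). a(i := toggle (a i) f)) ` ({..<m} \<times> UNIV))"
proof -
  have "{a(i := toggle (a i) f) | i f. i < m} = (\<lambda>(i, f). a(i := toggle (a i) f)) ` ({..<m} \<times> UNIV)"
    by (auto simp: image_iff)
  then show ?thesis by (simp add: toggle_set_def toggle_def)
qed

lemma card_toggle_set_le: "card (toggle_set m (a :: 'f::finite joint)) \<le> m * CARD('f) + 1"
proof -
  have "card ((\<lambda>(i, f). a(i := toggle (a i) f)) ` ({..<m} \<times> (UNIV :: 'f set))) \<le> m * CARD('f)"
    using card_image_le[of "{..<m} \<times> (UNIV :: 'f set)"] by (simp add: card_cartesian_product)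
  then show ?thesis
    unfolding toggle_set_eq using card_insert_le_m1 by (simp add: card_insert_if)
qed

lemma card_toggle_set_le_square:
  assumes "1 \<le> m" "2 \<le> CARD('f::finite)"
  shows "real (card (toggle_set m (a :: 'f joint))) \<le> real m * real CARD('f) ^ 2"
proof -
  have "m * CARD('f) + 1 \<le> m * CARD('f) * 2" using assms by simp
  also have "\<dots> \<le> m * CARD('f) * CARD('f)" using assms by (intro mult_left_mono) auto
  finally have "card (toggle_set m a) \<le> m * CARD('f) * CARD('f)"
    using card_toggle_set_le[of m a] by linarith
  then have "real (card (toggle_set m a)) \<le> real (m * CARD('f) * CARD('f))"
    by (simp only: of_nat_le_iff)
  then show ?thesis by (simp add: power2_eq_square)
qed

theorem mainTheorem8:
  fixes m n :: nat and r :: "'f::finite \<Rightarrow> nat \<Rightarrow> real"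
    and astar :: "'f joint" and \<delta> :: real
  assumes "m \<ge> 1" and "CARD('f) \<ge> 2"
    and "pure_NE m r astar"
    and "0 < \<delta>" and "\<delta> < 1"
    and "real n \<ge> 8 * (real (m * CARD('f)) + 1) * ln ((real (m * CARD('f)) + 1) / \<delta>)"
  shows "measure_pmf.prob (dataset_pmf n (toggle_set m astar))
     {data. \<forall>i<m. \<forall>\<pi> :: 'f set pmf.
        loewner_ge (coords m) (covV m n data)
          (\<lambda>p q. idm p q + real n / (2 * real m * real (CARD('f)) ^ 4) *
             (\<Sum>b\<in>UNIV. pmf \<pi> b * (feat m i (astar(i := b)) p * feat m i (astar(i := b)) q)))}
     \<ge> 1 - \<delta>"
proof -
  define S where "S = toggle_set m astar"
  define Covered where
    "Covered = {d. \<forall>s\<in>S. real n \<le> 2 * real (card S) * real (card {k\<in>{1..n}. d k = s})}"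
  have S: "finite S" "astar \<in> S" "\<And>i f. i < m \<Longrightarrow> astar(i := toggle (astar i) f) \<in> S"
    by (force simp: S_def toggle_set_eq)+
  have "card S > 0" using S by (auto simp: card_gt_0_iff)
  have "real (card S) \<le> real (m * CARD('f)) + 1"
    by (metis S_def card_toggle_set_le of_nat_1 of_nat_add of_nat_le_iff)
  then have "real (card S) * exp (- real n / (8 * real (card S))) \<le> \<delta>"
    using \<open>card S > 0\<close> assms(4,6)
    by (intro sample_size_suffices[of _ "real (m * CARD('f)) + 1"]) (simp_all add: S_def)
  then have "1 - \<delta> \<le> measure_pmf.prob (dataset_pmf n S) Covered"
    using Pi_pmf_uniform_covers[of "{1..n}" S undefined] S(1) \<open>card S > 0\<close>
    by (simp add: dataset_pmf_def Covered_def card_gt_0_iff)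
  also have "\<dots> \<le> measure_pmf.prob (dataset_pmf n S) {data. \<forall>i<m. \<forall>\<pi> :: 'f set pmf.
        loewner_ge (coords m) (covV m n data)
          (\<lambda>p q. idm p q + real n / (2 * real m * real (CARD('f)) ^ 4) *
             (\<Sum>b\<in>UNIV. pmf \<pi> b * (feat m i (astar(i := b)) p * feat m i (astar(i := b)) q)))}"
    using S card_toggle_set_le_square[OF assms(1,2), of astar]
    by (intro measure_pmf.finite_measure_mono subsetI CollectI allI impI
          covV_dominates_deviations[where S = S])
       (auto simp: Covered_def S_def)
  finally show ?thesis unfolding S_def .
qed

end
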